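(* Let $p_0^{(k)},\dots,p_n^{(k)}\in\mathcal{P}$ be the preference densities of the $n+1$ agents at iteration $k$. Construct the densities at iteration $k+1$ sequentially for $i=0,1,\dots,n$, in that order, by $$p_i^{(k+1)}(f) = \frac{p_i^{(k)}(f)\exp\big(-\bar{\gamma}_i^{(k)}(f)\big)}{\int_{\mathcal{F}} p_i^{(k)}(g)\exp\big(-\bar{\gamma}_i^{(k)}(g)\big)\, dg},$$ where $$\bar{\gamma}_i^{(k)}(f) = \sum_{j=0}^{i-1} \int_{\mathcal{F}} \psi(f, g)\, p_j^{(k+1)}(g)\, dg + \sum_{j=i+1}^{n} \int_{\mathcal{F}} \psi(f, g)\, p_j^{(k)}(g)\, dg .$$ If $p_i^{(k+1)} \neq p_i^{(k)}$ for some $i\in\{0,\dots,n\}$, then there exists $\xi>0$ such that $$J_c\big(p_0^{(k+1)},\dots,p_n^{(k+1)}\big) \le J_c\big(p_0^{(k)},\dots,p_n^{(k)}\big) - \xi .$$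
   Context: Trajectory space: $\mathcal{F} \subseteq \mathbb{R}^{d\times T}$, where $d$ is the state dimension and $T$ is the number of time points. Distribution space: $\mathcal{P}$ is the set of probability density functions $p:\mathcal{F}\to[0,\infty)$ with $\int_{\mathcal{F}} p(f)\,df=1$. There are $n+1$ agents, indexed $0,1,\dots,n$ (index $0$ is the robot). The collision penalty function $\psi:\mathcal{F}\times\mathcal{F}\to[0,\infty)$ is symmetric, i.e. $\psi(f,g)=\psi(g,f)$. The expected collision penalty of two densities is $$c(p,q)=\int_{\mathcal{F}}\int_{\mathcal{F}}\psi(f,g)\,p(f)\,q(g)\,df\,dg,$$ and the joint expected collision penalty is $$J_c(p_0,\dots,p_n)=\sum_{i=0}^{n}\sum_{j=i+1}^{n} c(p_i,p_j).$$ *)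

theory Defs
  imports "HOL-Analysis.Analysis"
begin

text \<open>Trajectories live in a Lebesgue-measurable set F of a Euclidean space
  (instantiated below by d x T real matrices).\<close>

definition is_density :: "'a::euclidean_space set \<Rightarrow> ('a \<Rightarrow> real) \<Rightarrow> bool" where
  "is_density F p \<longleftrightarrow> p \<in> borel_measurable lborel \<and> (\<forall>f\<in>F. 0 \<le> p f)
      \<and> (\<integral>\<^sup>+f\<in>F. ennreal (p f) \<partial>lborel) = 1"

definition coll :: "('a::euclidean_space \<Rightarrow> 'a \<Rightarrow> real) \<Rightarrow> 'a set
    \<Rightarrow> ('a \<Rightarrow> real) \<Rightarrow> ('a \<Rightarrow> real) \<Rightarrow> ennreal" where
  "coll \<psi> F p q = (\<integral>\<^sup>+f\<in>F. (\<integral>\<^sup>+g\<in>F. ennreal (\<psi> f g * p f * q g) \<partial>lborel) \<partial>lborel)"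

definition Jc :: "('a::euclidean_space \<Rightarrow> 'a \<Rightarrow> real) \<Rightarrow> 'a set \<Rightarrow> nat
    \<Rightarrow> (nat \<Rightarrow> 'a \<Rightarrow> real) \<Rightarrow> ennreal" where
  "Jc \<psi> F n P = (\<Sum>i\<in>{0..n}. \<Sum>j\<in>{i+1..n}. coll \<psi> F (P i) (P j))"

definition gamma_bar :: "('a::euclidean_space \<Rightarrow> 'a \<Rightarrow> real) \<Rightarrow> 'a set \<Rightarrow> nat
    \<Rightarrow> (nat \<Rightarrow> 'a \<Rightarrow> real) \<Rightarrow> (nat \<Rightarrow> 'a \<Rightarrow> real) \<Rightarrow> nat \<Rightarrow> 'a \<Rightarrow> ennreal" where
  "gamma_bar \<psi> F n Pnew Pold i f =
     (\<Sum>j\<in>{0..<i}. \<integral>\<^sup>+g\<in>F. ennreal (\<psi> f g * Pnew j g) \<partial>lborel)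
   + (\<Sum>j\<in>{i+1..n}. \<integral>\<^sup>+g\<in>F. ennreal (\<psi> f g * Pold j g) \<partial>lborel)"

definition expneg :: "ennreal \<Rightarrow> ennreal" where
  "expneg x = (if x = \<infinity> then 0 else ennreal (exp (- enn2real x)))"

end

theory Submission
  imports Defs
begin

text \<open>With the other agents fixed, J_c is affine in the density p_i of agent i: it is a term
  not involving p_i plus the expected cost of p_i against the potential \<gamma> created by the
  others (new densities for j < i, old ones for j > i), which is exactly gamma_bar. The update
  replaces p_i by the Gibbs density p_i exp(-\<gamma>) / Z. For a probability density p with
  expected cost c, integrating (\<gamma> - c) (exp(-\<gamma>) - exp(-c)) \<le> 0 against p gives
  E_p[\<gamma> exp(-\<gamma>)] \<le> c Z, i.e. the Gibbs density has expected cost at most c, with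
  equality only if \<gamma> = c wherever p > 0, in which case the update leaves p unchanged.
  So the n + 1 coordinate steps never increase J_c and the step of an agent whose density
  changes decreases it strictly whenever J_c is finite; the decrease is the gap \<xi>. If J_c is
  infinite, any \<xi> works because \<infinity> - \<xi> = \<infinity> in ennreal.\<close>

lemma ennreal_le_minus_pos:
  fixes a b :: ennreal
  assumes "b \<le> a" and "a \<noteq> \<infinity> \<Longrightarrow> b < a"
  shows "\<exists>\<xi>::real. \<xi> > 0 \<and> b \<le> a - ennreal \<xi>"
proof (cases a)
  case (real x)
  then obtain y where y: "b = ennreal y" "0 \<le> y" "y < x"
    using assms by (cases b) (auto simp: ennreal_less_iff)
  then have "a - ennreal (x - y) = b"
    using real by (simp add: ennreal_minus)
  then show ?thesis
    using y by (intro exI[of _ "x - y"]) simp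
qed (auto intro: exI[of _ 1])

lemma ennreal_chain_descent:
  fixes J :: "nat \<Rightarrow> ennreal"
  assumes step: "\<And>m. m \<le> n \<Longrightarrow> J (Suc m) \<le> J m"
  shows "J (Suc n) \<le> J 0"
    and "i \<le> n \<Longrightarrow> (J i \<noteq> \<infinity> \<Longrightarrow> J (Suc i) < J i) \<Longrightarrow> J 0 \<noteq> \<infinity> \<Longrightarrow> J (Suc n) < J 0"
proof -
  have antimono: "J m' \<le> J m" if "m \<le> m'" "m' \<le> Suc n" for m m'
    using step that by (intro lift_Suc_antimono_le_ivl[of "{..n}" J m m']) auto
  then show "J (Suc n) \<le> J 0"
    by simp
  assume "i \<le> n" and strict: "J i \<noteq> \<infinity> \<Longrightarrow> J (Suc i) < J i" and "J 0 \<noteq> \<infinity>"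
  then have "J i \<noteq> \<infinity>"
    using antimono[of 0 i] by (auto simp: top_unique)
  then have "J (Suc i) < J i"
    by (rule strict)
  then show "J (Suc n) < J 0"
    using antimono[of 0 i] antimono[of "Suc i" "Suc n"] \<open>i \<le> n\<close> by simp
qed

lemma expneg_measurable [measurable]: "expneg \<in> borel_measurable borel"
  unfolding expneg_def by measurable

lemma expneg_le_1: "expneg x \<le> 1"
  by (auto simp: expneg_def)

lemma expneg_neq_top [simp]: "expneg x \<noteq> top"
  by (simp add: expneg_def)

lemma expneg_eq_0_iff [simp]: "expneg x = 0 \<longleftrightarrow> x = top"
  by (simp add: expneg_def)

lemma expneg_ennreal: "0 \<le> c \<Longrightarrow> expneg (ennreal c) = ennreal (exp (- c))"
  by (auto simp: expneg_def)

lemma exp_neg_rearrangement: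
  fixes t c :: real
  shows "t * exp (- t) + c * exp (- c) \<le> c * exp (- t) + t * exp (- c)"
    and "t \<noteq> c \<Longrightarrow> t * exp (- t) + c * exp (- c) < c * exp (- t) + t * exp (- c)"
proof -
  have diff: "t * exp (- t) + c * exp (- c) - (c * exp (- t) + t * exp (- c))
      = (t - c) * (exp (- t) - exp (- c))"
    by (simp add: algebra_simps)
  have "(t - c) * (exp (- t) - exp (- c)) \<le> 0"
    by (cases "t \<le> c") (auto simp: mult_nonneg_nonpos mult_nonpos_nonneg)
  then show "t * exp (- t) + c * exp (- c) \<le> c * exp (- t) + t * exp (- c)"
    using diff by linarith
  assume "t \<noteq> c"
  then have "(t - c) * (exp (- t) - exp (- c)) < 0"
    by (cases "t < c") (auto simp: mult_pos_neg mult_neg_pos)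
  then show "t * exp (- t) + c * exp (- c) < c * exp (- t) + t * exp (- c)"
    using diff by linarith
qed

lemma expneg_rearrangement:
  fixes x y :: ennreal
  assumes "y \<noteq> \<infinity>"
  shows "x * expneg x + y * expneg y \<le> y * expneg x + x * expneg y"
    and "x \<noteq> y \<Longrightarrow> x * expneg x + y * expneg y < y * expneg x + x * expneg y"
proof -
  obtain c where y: "y = ennreal c" "0 \<le> c"
    using assms by (cases y) auto
  have "x * expneg x + y * expneg y \<le> y * expneg x + x * expneg y \<and>
    (x \<noteq> y \<longrightarrow> x * expneg x + y * expneg y < y * expneg x + x * expneg y)"
  proof (cases x)
    case (real t)
    then have lhs: "x * expneg x + y * expneg y = ennreal (t * exp (- t) + c * exp (- c))"
      and rhs: "y * expneg x + x * expneg y = ennreal (c * exp (- t) + t * exp (- c))"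
      using y by (simp_all add: expneg_ennreal ennreal_mult ennreal_plus)
    have "0 \<le> t * exp (- t) + c * exp (- c)"
      using real y by simp
    moreover have "x \<noteq> y \<Longrightarrow> t \<noteq> c"
      using real y by auto
    ultimately show ?thesis
      unfolding lhs rhs using exp_neg_rearrangement[of t c]
      by (auto simp: ennreal_less_iff intro: ennreal_leI)
  next
    case top
    have "y * expneg y < \<infinity>"
      using assms by (simp add: ennreal_mult_eq_top_iff flip: less_top)
    then show ?thesis
      using top assms by (simp add: expneg_def)
  qed
  then show "x * expneg x + y * expneg y \<le> y * expneg x + x * expneg y"
    and "x \<noteq> y \<Longrightarrow> x * expneg x + y * expneg y < y * expneg x + x * expneg y"
    by auto
qed

lemma nn_integral_expneg_le_1:
  assumes "(\<integral>\<^sup>+x. ennreal (p x) \<partial>M) = 1"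
  shows "(\<integral>\<^sup>+x. ennreal (p x) * expneg (\<gamma> x) \<partial>M) \<le> 1"
  unfolding assms[symmetric] by (intro nn_integral_mono) (simp add: expneg_le_1 mult_left_le)

lemma nn_integral_expneg_pos:
  fixes p :: "'a \<Rightarrow> real" and \<gamma> :: "'a \<Rightarrow> ennreal"
  assumes [measurable]: "p \<in> borel_measurable M" "\<gamma> \<in> borel_measurable M"
    and total: "(\<integral>\<^sup>+x. ennreal (p x) \<partial>M) = 1"
    and finite_cost: "(\<integral>\<^sup>+x. ennreal (p x) * \<gamma> x \<partial>M) \<noteq> \<infinity>"
  shows "0 < (\<integral>\<^sup>+x. ennreal (p x) * expneg (\<gamma> x) \<partial>M)"
proof (rule ccontr)
  assume "\<not> ?thesis"
  then have "AE x in M. ennreal (p x) * expneg (\<gamma> x) = 0"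
    by (simp add: nn_integral_0_iff_AE)
  moreover have "AE x in M. ennreal (p x) * \<gamma> x \<noteq> \<infinity>"
    using finite_cost by (intro nn_integral_PInf_AE) auto
  ultimately have "AE x in M. ennreal (p x) = 0"
    by eventually_elim (auto simp: ennreal_mult_eq_top_iff)
  then have "(\<integral>\<^sup>+x. ennreal (p x) \<partial>M) = 0"
    by (simp add: nn_integral_0_iff_AE)
  with total show False
    by simp
qed

lemma nn_integral_expneg_rearrangement_sides:
  fixes p :: "'a \<Rightarrow> real" and \<gamma> :: "'a \<Rightarrow> ennreal"
  assumes [measurable]: "p \<in> borel_measurable M" "\<gamma> \<in> borel_measurable M"
    and total: "(\<integral>\<^sup>+x. ennreal (p x) \<partial>M) = 1"
    and cost: "(\<integral>\<^sup>+x. ennreal (p x) * \<gamma> x \<partial>M) = C"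
  shows "(\<integral>\<^sup>+x. ennreal (p x) * (\<gamma> x * expneg (\<gamma> x) + C * expneg C) \<partial>M)
      = (\<integral>\<^sup>+x. ennreal (p x) * expneg (\<gamma> x) * \<gamma> x \<partial>M) + C * expneg C"
    and "(\<integral>\<^sup>+x. ennreal (p x) * (C * expneg (\<gamma> x) + \<gamma> x * expneg C) \<partial>M)
      = C * (\<integral>\<^sup>+x. ennreal (p x) * expneg (\<gamma> x) \<partial>M) + C * expneg C"
proof -
  have "(\<integral>\<^sup>+x. ennreal (p x) * (\<gamma> x * expneg (\<gamma> x) + C * expneg C) \<partial>M)
      = (\<integral>\<^sup>+x. ennreal (p x) * expneg (\<gamma> x) * \<gamma> x + ennreal (p x) * (C * expneg C) \<partial>M)"
    by (intro nn_integral_cong) (simp add: distrib_left ac_simps)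
  also have "\<dots> = (\<integral>\<^sup>+x. ennreal (p x) * expneg (\<gamma> x) * \<gamma> x \<partial>M)
      + (\<integral>\<^sup>+x. ennreal (p x) * (C * expneg C) \<partial>M)"
    by (rule nn_integral_add) auto
  also have "(\<integral>\<^sup>+x. ennreal (p x) * (C * expneg C) \<partial>M) = C * expneg C"
    by (simp add: nn_integral_multc total)
  finally show "(\<integral>\<^sup>+x. ennreal (p x) * (\<gamma> x * expneg (\<gamma> x) + C * expneg C) \<partial>M)
      = (\<integral>\<^sup>+x. ennreal (p x) * expneg (\<gamma> x) * \<gamma> x \<partial>M) + C * expneg C" .
  have "(\<integral>\<^sup>+x. ennreal (p x) * (C * expneg (\<gamma> x) + \<gamma> x * expneg C) \<partial>M)
      = (\<integral>\<^sup>+x. C * (ennreal (p x) * expneg (\<gamma> x)) + ennreal (p x) * \<gamma> x * expneg C \<partial>M)"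
    by (intro nn_integral_cong) (simp add: distrib_left ac_simps)
  also have "\<dots> = C * (\<integral>\<^sup>+x. ennreal (p x) * expneg (\<gamma> x) \<partial>M) + C * expneg C"
    by (simp add: nn_integral_add nn_integral_cmult nn_integral_multc cost)
  finally show "(\<integral>\<^sup>+x. ennreal (p x) * (C * expneg (\<gamma> x) + \<gamma> x * expneg C) \<partial>M)
      = C * (\<integral>\<^sup>+x. ennreal (p x) * expneg (\<gamma> x) \<partial>M) + C * expneg C" .
qed

lemma nn_integral_expneg_cost_le:
  fixes p :: "'a \<Rightarrow> real" and \<gamma> :: "'a \<Rightarrow> ennreal"
  assumes [measurable]: "p \<in> borel_measurable M" "\<gamma> \<in> borel_measurable M"
    and total: "(\<integral>\<^sup>+x. ennreal (p x) \<partial>M) = 1"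
    and cost: "(\<integral>\<^sup>+x. ennreal (p x) * \<gamma> x \<partial>M) = C" and "C \<noteq> \<infinity>"
  shows "(\<integral>\<^sup>+x. ennreal (p x) * expneg (\<gamma> x) * \<gamma> x \<partial>M)
      \<le> C * (\<integral>\<^sup>+x. ennreal (p x) * expneg (\<gamma> x) \<partial>M)" (is "?X \<le> C * ?Z")
    and "\<not> (AE x in M. ennreal (p x) \<noteq> 0 \<longrightarrow> \<gamma> x = C) \<Longrightarrow>
      (\<integral>\<^sup>+x. ennreal (p x) * expneg (\<gamma> x) * \<gamma> x \<partial>M)
      < C * (\<integral>\<^sup>+x. ennreal (p x) * expneg (\<gamma> x) \<partial>M)"
proof -
  \<comment> \<open>K is added to both sides so that the argument needs no subtraction in ennreal.\<close>
  define K where "K = C * expneg C"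
  have K_finite: "K \<noteq> \<infinity>"
    unfolding K_def using \<open>C \<noteq> \<infinity>\<close> expneg_le_1[of C]
    by (auto simp: ennreal_mult_eq_top_iff top_unique)
  define f where "f x = ennreal (p x) * (\<gamma> x * expneg (\<gamma> x) + K)" for x
  define g where "g x = ennreal (p x) * (C * expneg (\<gamma> x) + \<gamma> x * expneg C)" for x
  have [measurable]: "f \<in> borel_measurable M"
    unfolding f_def by measurable
  have [measurable]: "g \<in> borel_measurable M"
    unfolding g_def by measurable
  have f_le_g: "f x \<le> g x" for x
    unfolding f_def g_def K_def using \<open>C \<noteq> \<infinity>\<close>
    by (intro mult_left_mono expneg_rearrangement(1)) auto
  note sides = nn_integral_expneg_rearrangement_sides[OF assms(1,2) total cost, folded K_def]
  have int_f: "(\<integral>\<^sup>+x. f x \<partial>M) = ?X + K"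
    unfolding f_def by (rule sides(1))
  have int_g: "(\<integral>\<^sup>+x. g x \<partial>M) = C * ?Z + K"
    unfolding g_def by (rule sides(2))
  have "?X + K \<le> C * ?Z + K"
    unfolding int_f[symmetric] int_g[symmetric] by (intro nn_integral_mono f_le_g)
  then show X_le: "?X \<le> C * ?Z"
    using K_finite by (simp add: add.commute[of _ K] ennreal_add_left_cancel_le)
  assume not_const: "\<not> (AE x in M. ennreal (p x) \<noteq> 0 \<longrightarrow> \<gamma> x = C)"
  have "?Z \<noteq> \<infinity>"
    using nn_integral_expneg_le_1[OF total, of \<gamma>] by (auto simp: top_unique)
  with X_le \<open>C \<noteq> \<infinity>\<close> have "?X \<noteq> \<infinity>"
    by (auto simp: ennreal_mult_eq_top_iff top_unique)
  with int_f K_finite have "(\<integral>\<^sup>+x. f x \<partial>M) \<noteq> \<infinity>"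
    by simp
  moreover have const_if_g_le_f: "ennreal (p x) \<noteq> 0 \<longrightarrow> \<gamma> x = C" if "g x \<le> f x" for x
  proof (intro impI, rule ccontr)
    assume "ennreal (p x) \<noteq> 0" "\<gamma> x \<noteq> C"
    then have "f x < g x"
      unfolding f_def g_def K_def using \<open>C \<noteq> \<infinity>\<close>
      by (intro ennreal_mult_strict_left_mono expneg_rearrangement(2))
        (auto simp: zero_less_iff_neq_zero)
    with that show False
      by simp
  qed
  have "\<not> (AE x in M. g x \<le> f x)"
  proof
    assume "AE x in M. g x \<le> f x"
    then have "AE x in M. ennreal (p x) \<noteq> 0 \<longrightarrow> \<gamma> x = C"
      by eventually_elim (rule const_if_g_le_f)
    with not_const show False
      by blast
  qed
  ultimately have "?X + K < C * ?Z + K"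
    unfolding int_f[symmetric] int_g[symmetric] by (intro nn_integral_less) (auto intro: f_le_g)
  then show "?X < C * ?Z"
    using K_finite by (simp add: add.commute[of _ K] ennreal_add_left_cancel_less)
qed

lemma ennreal_gibbs_update:
  assumes "0 < Z" and "q = enn2real (ennreal p * expneg y / Z)"
  shows "ennreal q = ennreal p * expneg y / Z"
proof -
  have "ennreal p * expneg y / Z \<noteq> \<infinity>"
    using \<open>0 < Z\<close> by (auto simp: ennreal_divide_eq_top_iff ennreal_mult_eq_top_iff)
  then show ?thesis
    using assms(2) by (simp add: less_top)
qed

lemma gibbs_update_AE_eq_if_cost_const:
  fixes p q :: "'a \<Rightarrow> real" and \<gamma> :: "'a \<Rightarrow> ennreal"
  assumes [measurable]: "p \<in> borel_measurable M" "\<gamma> \<in> borel_measurable M"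
    and nonneg: "\<And>x. x \<in> space M \<Longrightarrow> 0 \<le> p x"
    and total: "(\<integral>\<^sup>+x. ennreal (p x) \<partial>M) = 1"
    and update: "\<And>x. x \<in> space M \<Longrightarrow>
      q x = enn2real (ennreal (p x) * expneg (\<gamma> x) / (\<integral>\<^sup>+y. ennreal (p y) * expneg (\<gamma> y) \<partial>M))"
    and const: "AE x in M. ennreal (p x) \<noteq> 0 \<longrightarrow> \<gamma> x = C" and "C \<noteq> \<infinity>"
  shows "AE x in M. q x = p x"
proof -
  define Z where "Z = (\<integral>\<^sup>+y. ennreal (p y) * expneg (\<gamma> y) \<partial>M)"
  from const have weights: "AE x in M. ennreal (p x) * expneg (\<gamma> x) = ennreal (p x) * expneg C"
    by eventually_elim auto
  then have "Z = (\<integral>\<^sup>+x. ennreal (p x) * expneg C \<partial>M)"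
    unfolding Z_def by (rule nn_integral_cong_AE)
  then have Z_eq: "Z = expneg C"
    by (simp add: nn_integral_multc total)
  have Z_pos: "0 < Z" and Z_finite: "Z \<noteq> \<infinity>"
    using \<open>C \<noteq> \<infinity>\<close> by (simp_all add: Z_eq zero_less_iff_neq_zero)
  from weights show ?thesis
  proof (rule AE_mp, intro AE_I2 impI)
    fix x assume x: "x \<in> space M"
      and "ennreal (p x) * expneg (\<gamma> x) = ennreal (p x) * expneg C"
    then have "ennreal (q x) = ennreal (p x) * Z / Z"
      using ennreal_gibbs_update[OF Z_pos update[OF x, folded Z_def]] by (simp add: Z_eq)
    also have "\<dots> = ennreal (p x)"
      using Z_pos Z_finite by (simp add: ennreal_mult_divide_eq)
    finally show "q x = p x"
      using nonneg[OF x] update[OF x] by simp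
  qed
qed

lemma gibbs_update_cost_le:
  fixes p q :: "'a \<Rightarrow> real" and \<gamma> :: "'a \<Rightarrow> ennreal"
  assumes [measurable]: "p \<in> borel_measurable M" "\<gamma> \<in> borel_measurable M"
    and nonneg: "\<And>x. x \<in> space M \<Longrightarrow> 0 \<le> p x"
    and total: "(\<integral>\<^sup>+x. ennreal (p x) \<partial>M) = 1"
    and finite_cost: "(\<integral>\<^sup>+x. ennreal (p x) * \<gamma> x \<partial>M) \<noteq> \<infinity>"
    and update: "\<And>x. x \<in> space M \<Longrightarrow>
      q x = enn2real (ennreal (p x) * expneg (\<gamma> x) / (\<integral>\<^sup>+y. ennreal (p y) * expneg (\<gamma> y) \<partial>M))"
  shows "(\<integral>\<^sup>+x. ennreal (q x) * \<gamma> x \<partial>M) \<le> (\<integral>\<^sup>+x. ennreal (p x) * \<gamma> x \<partial>M)"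
    and "\<not> (AE x in M. q x = p x) \<Longrightarrow>
      (\<integral>\<^sup>+x. ennreal (q x) * \<gamma> x \<partial>M) < (\<integral>\<^sup>+x. ennreal (p x) * \<gamma> x \<partial>M)"
proof -
  define Z where "Z = (\<integral>\<^sup>+y. ennreal (p y) * expneg (\<gamma> y) \<partial>M)"
  define C where "C = (\<integral>\<^sup>+x. ennreal (p x) * \<gamma> x \<partial>M)"
  have C_finite: "C \<noteq> \<infinity>"
    using finite_cost by (simp add: C_def)
  have Z_pos: "0 < Z"
    using nn_integral_expneg_pos[OF assms(1,2) total finite_cost] by (simp add: Z_def)
  have Z_finite: "Z \<noteq> \<infinity>"
    using nn_integral_expneg_le_1[OF total, of \<gamma>] unfolding Z_def by (auto simp: top_unique)
  have "(\<integral>\<^sup>+x. ennreal (q x) * \<gamma> x \<partial>M) = (\<integral>\<^sup>+x. ennreal (p x) * expneg (\<gamma> x) * \<gamma> x / Z \<partial>M)"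
    using ennreal_gibbs_update[OF Z_pos update[folded Z_def]]
    by (intro nn_integral_cong) (simp add: divide_ennreal_def ac_simps)
  also have "\<dots> = (\<integral>\<^sup>+x. ennreal (p x) * expneg (\<gamma> x) * \<gamma> x \<partial>M) / Z"
    by (rule nn_integral_divide) simp
  finally have cost_q: "(\<integral>\<^sup>+x. ennreal (q x) * \<gamma> x \<partial>M)
      = (\<integral>\<^sup>+x. ennreal (p x) * expneg (\<gamma> x) * \<gamma> x \<partial>M) / Z" .
  note cost_le = nn_integral_expneg_cost_le[OF assms(1,2) total C_def[symmetric] C_finite, folded Z_def]
  show "(\<integral>\<^sup>+x. ennreal (q x) * \<gamma> x \<partial>M) \<le> (\<integral>\<^sup>+x. ennreal (p x) * \<gamma> x \<partial>M)"
    unfolding cost_q C_def[symmetric] using cost_le(1)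
    by (intro divide_le_posI_ennreal[OF Z_pos]) (simp_all add: mult.commute)
  assume "\<not> (AE x in M. q x = p x)"
  then have "\<not> (AE x in M. ennreal (p x) \<noteq> 0 \<longrightarrow> \<gamma> x = C)"
    using gibbs_update_AE_eq_if_cost_const[OF assms(1,2) nonneg total update _ C_finite]
    by (rule contrapos_nn)
  then have "(\<integral>\<^sup>+x. ennreal (p x) * expneg (\<gamma> x) * \<gamma> x \<partial>M) < C * Z"
    by (rule cost_le(2))
  then show "(\<integral>\<^sup>+x. ennreal (q x) * \<gamma> x \<partial>M) < (\<integral>\<^sup>+x. ennreal (p x) * \<gamma> x \<partial>M)"
    unfolding cost_q C_def[symmetric] using Z_pos Z_finite
    by (subst divide_less_ennreal) (auto simp: less_top mult.commute)
qed

lemma gibbs_update_set_cost_le: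
  fixes p q :: "'a \<Rightarrow> real" and \<gamma> :: "'a \<Rightarrow> ennreal"
  assumes A: "A \<in> sets M"
    and [measurable]: "p \<in> borel_measurable M" "\<gamma> \<in> borel_measurable M"
    and nonneg: "\<And>x. x \<in> A \<Longrightarrow> 0 \<le> p x"
    and total: "(\<integral>\<^sup>+x\<in>A. ennreal (p x) \<partial>M) = 1"
    and finite_cost: "(\<integral>\<^sup>+x\<in>A. ennreal (p x) * \<gamma> x \<partial>M) \<noteq> \<infinity>"
    and update: "\<And>x. x \<in> A \<Longrightarrow>
      q x = enn2real (ennreal (p x) * expneg (\<gamma> x) / (\<integral>\<^sup>+y\<in>A. ennreal (p y) * expneg (\<gamma> y) \<partial>M))"
  shows "(\<integral>\<^sup>+x\<in>A. ennreal (q x) * \<gamma> x \<partial>M) \<le> (\<integral>\<^sup>+x\<in>A. ennreal (p x) * \<gamma> x \<partial>M)"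
    and "\<not> (AE x in M. x \<in> A \<longrightarrow> q x = p x) \<Longrightarrow>
      (\<integral>\<^sup>+x\<in>A. ennreal (q x) * \<gamma> x \<partial>M) < (\<integral>\<^sup>+x\<in>A. ennreal (p x) * \<gamma> x \<partial>M)"
proof -
  have A': "A \<inter> space M \<in> sets M"
    using A by simp
  note restrict = nn_integral_restrict_space[OF A', symmetric]
  let ?MA = "restrict_space M A"
  have "(\<integral>\<^sup>+x. ennreal (q x) * \<gamma> x \<partial>?MA) \<le> (\<integral>\<^sup>+x. ennreal (p x) * \<gamma> x \<partial>?MA)
    \<and> (\<not> (AE x in ?MA. q x = p x) \<longrightarrow>
      (\<integral>\<^sup>+x. ennreal (q x) * \<gamma> x \<partial>?MA) < (\<integral>\<^sup>+x. ennreal (p x) * \<gamma> x \<partial>?MA))"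
    using gibbs_update_cost_le[of p ?MA \<gamma> q]
    using nonneg total finite_cost update
    by (simp add: measurable_restrict_space1 space_restrict_space restrict)
  then show "(\<integral>\<^sup>+x\<in>A. ennreal (q x) * \<gamma> x \<partial>M) \<le> (\<integral>\<^sup>+x\<in>A. ennreal (p x) * \<gamma> x \<partial>M)"
    and "\<not> (AE x in M. x \<in> A \<longrightarrow> q x = p x) \<Longrightarrow>
      (\<integral>\<^sup>+x\<in>A. ennreal (q x) * \<gamma> x \<partial>M) < (\<integral>\<^sup>+x\<in>A. ennreal (p x) * \<gamma> x \<partial>M)"
    by (simp_all add: restrict AE_restrict_space_iff[OF A'])
qed

lemma sum_pairs_split:
  fixes T :: "nat \<Rightarrow> nat \<Rightarrow> 'b::comm_monoid_add"
  assumes "i \<le> n"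
  shows "(\<Sum>a\<in>{0..n}. \<Sum>b\<in>{a+1..n}. T a b) =
    (\<Sum>a\<in>{0..n}-{i}. \<Sum>b\<in>{a+1..n}-{i}. T a b) + (\<Sum>a\<in>{0..<i}. T a i) + (\<Sum>b\<in>{i+1..n}. T i b)"
proof -
  have row_i: "(\<Sum>a\<in>{0..n}. \<Sum>b\<in>{a+1..n}. T a b)
      = (\<Sum>b\<in>{i+1..n}. T i b) + (\<Sum>a\<in>{0..n}-{i}. \<Sum>b\<in>{a+1..n}. T a b)"
    using assms by (subst sum.remove[of _ i]) auto
  have row_split: "(\<Sum>b\<in>{a+1..n}. T a b) = (if a < i then T a i else 0) + (\<Sum>b\<in>{a+1..n}-{i}. T a b)"
    if "a \<in> {0..n}-{i}" for a
  proof (cases "a < i")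
    case True
    then show ?thesis
      using assms by (subst sum.remove[of _ i]) auto
  next
    case False
    then have "{a+1..n}-{i} = {a+1..n}"
      by auto
    then show ?thesis
      using False by simp
  qed
  have column_i: "(\<Sum>a\<in>{0..n}-{i}. if a < i then T a i else 0) = (\<Sum>a\<in>{0..<i}. T a i)"
  proof -
    have "(\<Sum>a\<in>{0..n}-{i}. if a < i then T a i else 0) = (\<Sum>a\<in>{a\<in>{0..n}-{i}. a < i}. T a i)"
      by (rule sum.inter_filter[symmetric]) simp
    also have "{a\<in>{0..n}-{i}. a < i} = {0..<i}"
      using assms by auto
    finally show ?thesis .
  qed
  have "(\<Sum>a\<in>{0..n}-{i}. \<Sum>b\<in>{a+1..n}. T a b) =
      (\<Sum>a\<in>{0..n}-{i}. (if a < i then T a i else 0) + (\<Sum>b\<in>{a+1..n}-{i}. T a b))"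
    by (rule sum.cong) (auto simp only: row_split)
  also have "\<dots> = (\<Sum>a\<in>{0..<i}. T a i) + (\<Sum>a\<in>{0..n}-{i}. \<Sum>b\<in>{a+1..n}-{i}. T a b)"
    by (simp only: sum.distrib column_i)
  finally show ?thesis
    unfolding row_i by (simp add: ac_simps)
qed

lemma gamma_bar_cong:
  assumes "\<And>j g. j < i \<Longrightarrow> g \<in> F \<Longrightarrow> P j g = P' j g"
    and "\<And>j g. i < j \<Longrightarrow> j \<le> n \<Longrightarrow> g \<in> F \<Longrightarrow> Q j g = Q' j g"
  shows "gamma_bar \<psi> F n P Q i f = gamma_bar \<psi> F n P' Q' i f"
  unfolding gamma_bar_def using assms
  by (auto intro!: sum.cong arg_cong2[where f="(+)"] nn_integral_cong simp: indicator_def)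

lemma Jc_cong:
  assumes "\<And>j g. j \<le> n \<Longrightarrow> g \<in> F \<Longrightarrow> P j g = P' j g"
  shows "Jc \<psi> F n P = Jc \<psi> F n P'"
  unfolding Jc_def coll_def using assms
  by (auto intro!: sum.cong nn_integral_cong simp: indicator_def)

locale collision_penalty =
  fixes \<psi> :: "'a::euclidean_space \<Rightarrow> 'a \<Rightarrow> real" and F :: "'a set"
  assumes F_measurable [measurable]: "F \<in> sets lborel"
    and psi_measurable: "(\<lambda>(f, g). \<psi> f g) \<in> borel_measurable (lborel \<Otimes>\<^sub>M lborel)"
    and psi_nonneg: "\<And>f g. 0 \<le> \<psi> f g"
    and psi_sym: "\<And>f g. \<psi> f g = \<psi> g f"
begin

lemma psi_measurable_pair [measurable]:
  "(\<lambda>x. \<psi> (fst x) (snd x)) \<in> borel_measurable (lborel \<Otimes>\<^sub>M lborel)"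
  using psi_measurable by (simp add: split_beta')

lemma psi_measurable_right [measurable]: "\<psi> f \<in> borel_measurable lborel"
  using measurable_Pair2[OF psi_measurable_pair, of f] by simp

lemma potential_measurable [measurable]:
  assumes [measurable]: "q \<in> borel_measurable lborel"
  shows "(\<lambda>f. \<integral>\<^sup>+g\<in>F. ennreal (\<psi> f g * q g) \<partial>lborel) \<in> borel_measurable lborel"
  by measurable

lemma coll_eq_nn_integral_potential:
  assumes [measurable]: "q \<in> borel_measurable lborel"
    and p_nonneg: "\<And>x. x \<in> F \<Longrightarrow> 0 \<le> p x" and q_nonneg: "\<And>x. x \<in> F \<Longrightarrow> 0 \<le> q x"
  shows "coll \<psi> F p q = (\<integral>\<^sup>+f\<in>F. ennreal (p f) * (\<integral>\<^sup>+g\<in>F. ennreal (\<psi> f g * q g) \<partial>lborel) \<partial>lborel)"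
  unfolding coll_def
proof (intro nn_integral_cong)
  fix f
  show "(\<integral>\<^sup>+g\<in>F. ennreal (\<psi> f g * p f * q g) \<partial>lborel) * indicator F f
    = ennreal (p f) * (\<integral>\<^sup>+g\<in>F. ennreal (\<psi> f g * q g) \<partial>lborel) * indicator F f"
  proof (cases "f \<in> F")
    case True
    have "(\<integral>\<^sup>+g\<in>F. ennreal (\<psi> f g * p f * q g) \<partial>lborel)
        = (\<integral>\<^sup>+g. ennreal (p f) * (ennreal (\<psi> f g * q g) * indicator F g) \<partial>lborel)"
      using True p_nonneg q_nonneg psi_nonneg
      by (intro nn_integral_cong) (auto simp: indicator_def ennreal_mult' ac_simps)
    also have "\<dots> = ennreal (p f) * (\<integral>\<^sup>+g\<in>F. ennreal (\<psi> f g * q g) \<partial>lborel)"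
      by (rule nn_integral_cmult) measurable
    finally show ?thesis
      by simp
  qed simp
qed

lemma coll_commute:
  assumes [measurable]: "p \<in> borel_measurable lborel" "q \<in> borel_measurable lborel"
  shows "coll \<psi> F p q = coll \<psi> F q p"
proof -
  have "coll \<psi> F p q
      = (\<integral>\<^sup>+f. \<integral>\<^sup>+g. ennreal (\<psi> f g * p f * q g) * indicator F g * indicator F f \<partial>lborel \<partial>lborel)"
    unfolding coll_def
  proof (intro nn_integral_cong)
    fix f
    show "(\<integral>\<^sup>+g. ennreal (\<psi> f g * p f * q g) * indicator F g \<partial>lborel) * indicator F f =
      (\<integral>\<^sup>+g. ennreal (\<psi> f g * p f * q g) * indicator F g * indicator F f \<partial>lborel)"
      by (rule nn_integral_multc[symmetric]) measurable
  qed
  also have "\<dots>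
      = (\<integral>\<^sup>+g. \<integral>\<^sup>+f. ennreal (\<psi> f g * p f * q g) * indicator F g * indicator F f \<partial>lborel \<partial>lborel)"
    by (rule lborel_pair.Fubini'[symmetric]) measurable
  also have "\<dots> = coll \<psi> F q p"
    unfolding coll_def
  proof (intro nn_integral_cong)
    fix g
    have "(\<integral>\<^sup>+f. ennreal (\<psi> f g * p f * q g) * indicator F g * indicator F f \<partial>lborel)
       = (\<integral>\<^sup>+f. ennreal (\<psi> g f * q g * p f) * indicator F f * indicator F g \<partial>lborel)"
      by (intro nn_integral_cong) (simp add: psi_sym[of _ g] ac_simps)
    also have "\<dots> = (\<integral>\<^sup>+f. ennreal (\<psi> g f * q g * p f) * indicator F f \<partial>lborel) * indicator F g"
      by (rule nn_integral_multc) measurable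
    finally show "(\<integral>\<^sup>+f. ennreal (\<psi> f g * p f * q g) * indicator F g * indicator F f \<partial>lborel)
       = (\<integral>\<^sup>+f. ennreal (\<psi> g f * q g * p f) * indicator F f \<partial>lborel) * indicator F g" .
  qed
  finally show ?thesis .
qed

lemma gamma_bar_measurable:
  assumes "\<And>j. j < i \<Longrightarrow> P j \<in> borel_measurable lborel"
    and "\<And>j. i < j \<Longrightarrow> j \<le> n \<Longrightarrow> Q j \<in> borel_measurable lborel"
  shows "gamma_bar \<psi> F n P Q i \<in> borel_measurable lborel"
  unfolding gamma_bar_def using assms
  by (intro borel_measurable_add borel_measurable_sum potential_measurable) auto

lemma Jc_split:
  assumes [measurable]: "\<And>j. j \<le> n \<Longrightarrow> P j \<in> borel_measurable lborel"
    and nonneg: "\<And>j x. j \<le> n \<Longrightarrow> x \<in> F \<Longrightarrow> 0 \<le> P j x" and i: "i \<le> n"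
  shows "Jc \<psi> F n P = (\<Sum>a\<in>{0..n}-{i}. \<Sum>b\<in>{a+1..n}-{i}. coll \<psi> F (P a) (P b))
     + (\<integral>\<^sup>+f\<in>F. ennreal (P i f) * gamma_bar \<psi> F n P P i f \<partial>lborel)"
proof -
  define H where
    "H j f = ennreal (P i f) * (\<integral>\<^sup>+g\<in>F. ennreal (\<psi> f g * P j g) \<partial>lborel) * indicator F f" for j f
  have H_measurable: "H j \<in> borel_measurable lborel" if "j \<le> n" for j
    unfolding H_def using that i by measurable
  have coll_H: "coll \<psi> F (P i) (P j) = (\<integral>\<^sup>+f. H j f \<partial>lborel)" if "j \<le> n" for j
    unfolding H_def using that i nonneg by (intro coll_eq_nn_integral_potential) auto
  have "(\<Sum>a\<in>{0..<i}. coll \<psi> F (P a) (P i)) + (\<Sum>b\<in>{i+1..n}. coll \<psi> F (P i) (P b))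
      = (\<Sum>a\<in>{0..<i}. \<integral>\<^sup>+f. H a f \<partial>lborel) + (\<Sum>b\<in>{i+1..n}. \<integral>\<^sup>+f. H b f \<partial>lborel)"
    using i by (simp add: coll_commute[of "P _" "P i"] coll_H)
  also have "\<dots> = (\<integral>\<^sup>+f. (\<Sum>a\<in>{0..<i}. H a f) \<partial>lborel) + (\<integral>\<^sup>+f. (\<Sum>b\<in>{i+1..n}. H b f) \<partial>lborel)"
    using i H_measurable by (subst (1 2) nn_integral_sum) (auto simp: measurable_lborel1)
  also have "\<dots> = (\<integral>\<^sup>+f. (\<Sum>a\<in>{0..<i}. H a f) + (\<Sum>b\<in>{i+1..n}. H b f) \<partial>lborel)"
    using i H_measurable by (intro nn_integral_add[symmetric]) (auto intro!: borel_measurable_sum)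
  also have "\<dots> = (\<integral>\<^sup>+f\<in>F. ennreal (P i f) * gamma_bar \<psi> F n P P i f \<partial>lborel)"
    by (intro nn_integral_cong)
      (simp add: H_def gamma_bar_def sum_distrib_left sum_distrib_right distrib_left distrib_right)
  finally show ?thesis
    unfolding Jc_def sum_pairs_split[OF i] add.assoc by simp
qed

lemma Jc_coordinate_update:
  assumes P_measurable: "\<And>j. j \<le> n \<Longrightarrow> P j \<in> borel_measurable lborel"
    and P_nonneg: "\<And>j x. j \<le> n \<Longrightarrow> x \<in> F \<Longrightarrow> 0 \<le> P j x"
    and i: "i \<le> n"
    and total: "(\<integral>\<^sup>+x\<in>F. ennreal (P i x) \<partial>lborel) = 1"
    and q_measurable: "q \<in> borel_measurable lborel"
    and update: "\<And>f. f \<in> F \<Longrightarrow> q f = enn2real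
      (ennreal (P i f) * expneg (gamma_bar \<psi> F n P P i f)
       / (\<integral>\<^sup>+g\<in>F. ennreal (P i g) * expneg (gamma_bar \<psi> F n P P i g) \<partial>lborel))"
  shows "Jc \<psi> F n (P(i := q)) \<le> Jc \<psi> F n P"
    and "Jc \<psi> F n P \<noteq> \<infinity> \<Longrightarrow> \<not> (AE f in lborel. f \<in> F \<longrightarrow> q f = P i f) \<Longrightarrow>
      Jc \<psi> F n (P(i := q)) < Jc \<psi> F n P"
proof -
  let ?\<gamma> = "gamma_bar \<psi> F n P P i"
  define R where "R = (\<Sum>a\<in>{0..n}-{i}. \<Sum>b\<in>{a+1..n}-{i}. coll \<psi> F (P a) (P b))"
  have J_old: "Jc \<psi> F n P = R + (\<integral>\<^sup>+f\<in>F. ennreal (P i f) * ?\<gamma> f \<partial>lborel)"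
    unfolding R_def using P_measurable P_nonneg i by (rule Jc_split)
  have "Jc \<psi> F n (P(i := q))
      = R + (\<integral>\<^sup>+f\<in>F. ennreal (q f) * gamma_bar \<psi> F n (P(i := q)) (P(i := q)) i f \<partial>lborel)"
    unfolding R_def using P_measurable q_measurable P_nonneg update i
    by (subst Jc_split[of n "P(i := q)" i]) (auto intro!: sum.cong)
  also have "gamma_bar \<psi> F n (P(i := q)) (P(i := q)) i = ?\<gamma>"
    by (intro ext gamma_bar_cong) auto
  finally have J_new: "Jc \<psi> F n (P(i := q)) = R + (\<integral>\<^sup>+f\<in>F. ennreal (q f) * ?\<gamma> f \<partial>lborel)" .
  define A where "A = (\<integral>\<^sup>+f\<in>F. ennreal (P i f) * ?\<gamma> f \<partial>lborel)"
  define B where "B = (\<integral>\<^sup>+f\<in>F. ennreal (q f) * ?\<gamma> f \<partial>lborel)"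
  have descent: "B \<le> A \<and> (\<not> (AE f in lborel. f \<in> F \<longrightarrow> q f = P i f) \<longrightarrow> B < A)" if "A \<noteq> \<infinity>"
    using gibbs_update_set_cost_le[OF F_measurable P_measurable[OF i] _ P_nonneg[OF i] total _ update]
      gamma_bar_measurable[of i P n P] P_measurable i that
    unfolding A_def B_def by auto
  show "Jc \<psi> F n (P(i := q)) \<le> Jc \<psi> F n P"
    unfolding J_old J_new A_def[symmetric] B_def[symmetric]
    using descent by (cases "A = \<infinity>") (auto intro: add_left_mono)
  assume "Jc \<psi> F n P \<noteq> \<infinity>" "\<not> (AE f in lborel. f \<in> F \<longrightarrow> q f = P i f)"
  then show "Jc \<psi> F n (P(i := q)) < Jc \<psi> F n P"
    unfolding J_old J_new A_def[symmetric] B_def[symmetric]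
    using descent by (simp add: ennreal_add_left_cancel_less)
qed

text \<open>Nothing is assumed about Pnew outside F, so only its truncation to F is measurable.\<close>

lemma sequential_update_measurable:
  assumes Pold_measurable: "\<And>j. j \<le> n \<Longrightarrow> Pold j \<in> borel_measurable lborel"
    and update: "\<And>i f. i \<le> n \<Longrightarrow> f \<in> F \<Longrightarrow>
       Pnew i f = enn2real
         (ennreal (Pold i f) * expneg (gamma_bar \<psi> F n Pnew Pold i f)
          / (\<integral>\<^sup>+g\<in>F. ennreal (Pold i g) * expneg (gamma_bar \<psi> F n Pnew Pold i g) \<partial>lborel))"
    and "i \<le> n"
  shows "(\<lambda>f. if f \<in> F then Pnew i f else 0) \<in> borel_measurable lborel"
  using \<open>i \<le> n\<close>
proof (induction i rule: less_induct)
  case (less i)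
  define N where "N j = (\<lambda>f. if f \<in> F then Pnew j f else 0)" for j
  have \<gamma>_eq: "gamma_bar \<psi> F n Pnew Pold i = gamma_bar \<psi> F n N Pold i"
    by (intro ext gamma_bar_cong) (auto simp: N_def)
  have [measurable]: "gamma_bar \<psi> F n N Pold i \<in> borel_measurable lborel"
    using less Pold_measurable by (intro gamma_bar_measurable) (auto simp: N_def)
  have [measurable]: "Pold i \<in> borel_measurable lborel"
    using less.prems by (rule Pold_measurable)
  have "N i = (\<lambda>f. if f \<in> F then enn2real (ennreal (Pold i f) * expneg (gamma_bar \<psi> F n N Pold i f)
      / (\<integral>\<^sup>+g\<in>F. ennreal (Pold i g) * expneg (gamma_bar \<psi> F n N Pold i g) \<partial>lborel)) else 0)"
    using update[OF less.prems] by (auto simp: N_def \<gamma>_eq)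
  also have "\<dots> \<in> borel_measurable lborel"
    by measurable
  finally show ?case
    by (simp add: N_def)
qed

lemma Jc_sequential_update:
  assumes dens: "\<And>i. i \<le> n \<Longrightarrow> is_density F (Pold i)"
    and update: "\<And>i f. i \<le> n \<Longrightarrow> f \<in> F \<Longrightarrow>
       Pnew i f = enn2real
         (ennreal (Pold i f) * expneg (gamma_bar \<psi> F n Pnew Pold i f)
          / (\<integral>\<^sup>+g\<in>F. ennreal (Pold i g) * expneg (gamma_bar \<psi> F n Pnew Pold i g) \<partial>lborel))"
  shows "Jc \<psi> F n Pnew \<le> Jc \<psi> F n Pold"
    and "Jc \<psi> F n Pold \<noteq> \<infinity> \<Longrightarrow> \<exists>i\<le>n. \<not> (AE f in lborel. f \<in> F \<longrightarrow> Pnew i f = Pold i f) \<Longrightarrow>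
      Jc \<psi> F n Pnew < Jc \<psi> F n Pold"
proof -
  have Pold_measurable: "\<And>j. j \<le> n \<Longrightarrow> Pold j \<in> borel_measurable lborel"
    and Pold_nonneg: "\<And>j x. j \<le> n \<Longrightarrow> x \<in> F \<Longrightarrow> 0 \<le> Pold j x"
    and Pold_total: "\<And>j. j \<le> n \<Longrightarrow> (\<integral>\<^sup>+x\<in>F. ennreal (Pold j x) \<partial>lborel) = 1"
    using dens unfolding is_density_def by blast+
  define N where "N j = (\<lambda>f. if f \<in> F then Pnew j f else 0)" for j
  define Q where "Q m = (\<lambda>j. if j < m then N j else Pold j)" for m
  define J where "J m = Jc \<psi> F n (Q m)" for m
  have N_measurable: "N j \<in> borel_measurable lborel" if "j \<le> n" for j
    unfolding N_def using Pold_measurable update that by (rule sequential_update_measurable)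
  have step: "J (Suc m) \<le> J m \<and>
      (J m \<noteq> \<infinity> \<longrightarrow> \<not> (AE f in lborel. f \<in> F \<longrightarrow> Pnew m f = Pold m f) \<longrightarrow> J (Suc m) < J m)"
    if m: "m \<le> n" for m
  proof -
    have "Q (Suc m) = (Q m)(m := N m)"
      by (auto simp: Q_def)
    moreover have "gamma_bar \<psi> F n (Q m) (Q m) m = gamma_bar \<psi> F n Pnew Pold m"
      by (intro ext gamma_bar_cong) (auto simp: Q_def N_def)
    moreover have "(AE f in lborel. f \<in> F \<longrightarrow> N m f = Q m m f) \<longleftrightarrow>
        (AE f in lborel. f \<in> F \<longrightarrow> Pnew m f = Pold m f)"
      by (intro AE_cong) (simp add: N_def Q_def)
    ultimately show ?thesis
      using Jc_coordinate_update[of n "Q m" m "N m"] m update[OF m]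
        N_measurable Pold_measurable Pold_nonneg Pold_total update
      by (auto simp: J_def Q_def N_def)
  qed
  have J_0: "J 0 = Jc \<psi> F n Pold"
    by (simp add: J_def Q_def)
  have J_Suc_n: "J (Suc n) = Jc \<psi> F n Pnew"
    unfolding J_def by (rule Jc_cong) (simp add: Q_def N_def)
  show "Jc \<psi> F n Pnew \<le> Jc \<psi> F n Pold"
    using ennreal_chain_descent(1)[of n J] step J_0 J_Suc_n by simp
  assume "Jc \<psi> F n Pold \<noteq> \<infinity>"
    and "\<exists>i\<le>n. \<not> (AE f in lborel. f \<in> F \<longrightarrow> Pnew i f = Pold i f)"
  then obtain i where "i \<le> n" "\<not> (AE f in lborel. f \<in> F \<longrightarrow> Pnew i f = Pold i f)" "J 0 \<noteq> \<infinity>"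
    using J_0 by auto
  then show "Jc \<psi> F n Pnew < Jc \<psi> F n Pold"
    using ennreal_chain_descent(2)[of n J i] step J_0 J_Suc_n by auto
qed

end

theorem theorem2:
  fixes \<psi> :: "real^'t^'d \<Rightarrow> real^'t^'d \<Rightarrow> real"
    and F :: "(real^'t^'d) set"
    and n :: nat
    and Pold Pnew :: "nat \<Rightarrow> real^'t^'d \<Rightarrow> real"
  assumes F_meas: "F \<in> sets lborel"
    and psi_meas: "(\<lambda>(f, g). \<psi> f g) \<in> borel_measurable (lborel \<Otimes>\<^sub>M lborel)"
    and psi_nonneg: "\<And>f g. 0 \<le> \<psi> f g"
    and psi_sym: "\<And>f g. \<psi> f g = \<psi> g f"
    and dens: "\<And>i. i \<le> n \<Longrightarrow> is_density F (Pold i)"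
    and update: "\<And>i f. i \<le> n \<Longrightarrow> f \<in> F \<Longrightarrow>
       Pnew i f = enn2real
         (ennreal (Pold i f) * expneg (gamma_bar \<psi> F n Pnew Pold i f)
          / (\<integral>\<^sup>+g\<in>F. ennreal (Pold i g) * expneg (gamma_bar \<psi> F n Pnew Pold i g) \<partial>lborel))"
    and changed: "\<exists>i\<le>n. \<not> (AE f in lborel. f \<in> F \<longrightarrow> Pnew i f = Pold i f)"
  shows "\<exists>\<xi>::real. \<xi> > 0 \<and> Jc \<psi> F n Pnew \<le> Jc \<psi> F n Pold - ennreal \<xi>"
proof -
  interpret collision_penalty \<psi> F
    using F_meas psi_meas psi_nonneg psi_sym by unfold_locales
  have "Jc \<psi> F n Pnew \<le> Jc \<psi> F n Pold"
    and "Jc \<psi> F n Pold \<noteq> \<infinity> \<Longrightarrow> Jc \<psi> F n Pnew < Jc \<psi> F n Pold"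
    using Jc_sequential_update[OF dens update] changed by blast+
  then show ?thesis
    by (rule ennreal_le_minus_pos)
qed

end
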